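(* Let $X_n$, $Y_n$, $Y$ be as in the context. For every $n\in\mathbb{N}$ and every subgraph $\Gamma$ of $X_n$ there is a coarse $1$-wiring of $\Gamma$ into $Y$ with volume at most $|VY_n|=(2^{2^{2n+1}}f(n)+1)f(n)$.
   Context: Fix a function $f:\mathbb{N}\to\mathbb{N}$ (with $\mathbb{N}=\{1,2,\dots\}$) that is surjective, satisfies $f(1)=1$, $2\leq f(n)\leq n$ for all $n\geq 2$, and $|f^{-1}(k)|=\infty$ for every $k\geq 2$. For $n\in\mathbb{N}$ let $X_n$ be the graph with vertex set $\{0,1,\dots,f(n)-1\}\times\{0,1,\dots,2^{2^{2n}}f(n)\}$, with edges $(i,j)(i,j+1)$ for all $0\leq i\leq f(n)-1$, $0\leq j\leq 2^{2^{2n}}f(n)-1$, and $(i,j)(i+1,j)$ for all $0\leq i\leq f(n)-2$ and all $j$ that are multiples of $2^{2^{2n}}$. Let $Y_n$ be defined in the same way with $2^{2^{2n}}$ replaced everywhere by $2^{2^{2n+1}}$. Let $Y=\bigsqcup_{n\geq1}Y_n$. A wiring of a finite graph $\Gamma$ into $Y$ is a continuous map sending vertices to vertices and each edge onto a union of edges (a path between the images of its endpoints, or a single vertex if these coincide); it is a coarse $k$-wiring if each vertex of $Y$ has at most $k$ preimage vertices and each edge of $Y$ lies in the images of at most $k$ edges of $\Gamma$; its volume is the number of vertices of its image. *)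

theory Defs
  imports Main
begin

(* Graphs: a vertex set and a set of undirected edges, each edge a 2-element set of vertices. *)

definition grid_V :: "nat \<Rightarrow> nat \<Rightarrow> (nat \<times> nat) set" where
  "grid_V L m = {0..<m} \<times> {0..L * m}"

definition grid_E :: "nat \<Rightarrow> nat \<Rightarrow> (nat \<times> nat) set set" where
  "grid_E L m =
     {{(i, j), (i, Suc j)} | i j. i < m \<and> j < L * m}
   \<union> {{(i, j), (Suc i, j)} | i j. Suc i < m \<and> j \<le> L * m \<and> L dvd j}"

definition XV :: "(nat \<Rightarrow> nat) \<Rightarrow> nat \<Rightarrow> (nat \<times> nat) set" where
  "XV f n = grid_V (2 ^ (2 ^ (2 * n))) (f n)"

definition XE :: "(nat \<Rightarrow> nat) \<Rightarrow> nat \<Rightarrow> (nat \<times> nat) set set" where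
  "XE f n = grid_E (2 ^ (2 ^ (2 * n))) (f n)"

definition YnV :: "(nat \<Rightarrow> nat) \<Rightarrow> nat \<Rightarrow> (nat \<times> nat) set" where
  "YnV f n = grid_V (2 ^ (2 ^ (2 * n + 1))) (f n)"

definition YnE :: "(nat \<Rightarrow> nat) \<Rightarrow> nat \<Rightarrow> (nat \<times> nat) set set" where
  "YnE f n = grid_E (2 ^ (2 ^ (2 * n + 1))) (f n)"

(* Disjoint union Y = \<Squnion>_{n \<ge> 1} Y_n, vertices tagged with the index n. *)
definition YV :: "(nat \<Rightarrow> nat) \<Rightarrow> (nat \<times> nat \<times> nat) set" where
  "YV f = {(n, v) | n v. 1 \<le> n \<and> v \<in> YnV f n}"

definition YE :: "(nat \<Rightarrow> nat) \<Rightarrow> (nat \<times> nat \<times> nat) set set" where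
  "YE f = {{(n, a), (n, b)} | n a b. 1 \<le> n \<and> {a, b} \<in> YnE f n}"

definition subgraph :: "'a set \<Rightarrow> 'a set set \<Rightarrow> 'a set \<Rightarrow> 'a set set \<Rightarrow> bool" where
  "subgraph V E V' E' \<longleftrightarrow> V \<subseteq> V' \<and> E \<subseteq> E' \<and> (\<forall>e\<in>E. e \<subseteq> V)"

definition is_path :: "'b set \<Rightarrow> 'b set set \<Rightarrow> 'b list \<Rightarrow> bool" where
  "is_path W F p \<longleftrightarrow> p \<noteq> [] \<and> distinct p \<and> set p \<subseteq> W \<and>
     (\<forall>i. Suc i < length p \<longrightarrow> {p ! i, p ! Suc i} \<in> F)"

definition path_edges :: "'b list \<Rightarrow> 'b set set" where
  "path_edges p = {{p ! i, p ! Suc i} | i. Suc i < length p}"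

(* Wiring of (V,E) into (W,F): vertex map phi and, for every edge, a path P e between the
   images of its endpoints (a single vertex if the images coincide, forced by distinctness). *)
definition is_wiring :: "'a set \<Rightarrow> 'a set set \<Rightarrow> 'b set \<Rightarrow> 'b set set \<Rightarrow>
    ('a \<Rightarrow> 'b) \<Rightarrow> ('a set \<Rightarrow> 'b list) \<Rightarrow> bool" where
  "is_wiring V E W F \<phi> P \<longleftrightarrow> (\<forall>x\<in>V. \<phi> x \<in> W) \<and>
     (\<forall>u v. {u, v} \<in> E \<longrightarrow> is_path W F (P {u, v}) \<and>
        {hd (P {u, v}), last (P {u, v})} = {\<phi> u, \<phi> v})"

definition coarse_wiring :: "nat \<Rightarrow> 'a set \<Rightarrow> 'a set set \<Rightarrow> 'b set \<Rightarrow> 'b set set \<Rightarrow>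
    ('a \<Rightarrow> 'b) \<Rightarrow> ('a set \<Rightarrow> 'b list) \<Rightarrow> bool" where
  "coarse_wiring k V E W F \<phi> P \<longleftrightarrow> is_wiring V E W F \<phi> P \<and>
     (\<forall>y\<in>W. finite {x\<in>V. \<phi> x = y} \<and> card {x\<in>V. \<phi> x = y} \<le> k) \<and>
     (\<forall>\<epsilon>\<in>F. finite {e\<in>E. \<epsilon> \<in> path_edges (P e)} \<and> card {e\<in>E. \<epsilon> \<in> path_edges (P e)} \<le> k)"

definition wiring_volume :: "'a set \<Rightarrow> 'a set set \<Rightarrow> ('a \<Rightarrow> 'b) \<Rightarrow> ('a set \<Rightarrow> 'b list) \<Rightarrow> nat" where
  "wiring_volume V E \<phi> P = card (\<phi> ` V \<union> (\<Union>e\<in>E. set (P e)))"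

end

theory Submission
  imports Defs
begin

text \<open>Stretch \<open>X\<^sub>n\<close> vertically by the factor \<open>L = 2^2^(2n)\<close>: since \<open>L\<^sup>2 = 2^2^(2n+1)\<close>, the
  vertex \<open>(i, j)\<close> goes to \<open>(i, L j)\<close> in \<open>Y\<^sub>n\<close>, a vertical edge becomes the column segment of length
  \<open>L\<close> above its lower end, and a horizontal edge, lying in a row \<open>j\<close> with \<open>L | j\<close>, becomes the
  horizontal edge of \<open>Y\<^sub>n\<close> in row \<open>L j\<close>, which is divisible by \<open>L\<^sup>2\<close>. The vertex map is injective
  and distinct edges get edge-disjoint paths, so this is a coarse 1-wiring whose image lies in
  \<open>Y\<^sub>n\<close>.\<close>

lemma coarse_wiring_1I:
  assumes "is_wiring V E W F \<phi> P" and "inj_on \<phi> V"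
    and "\<And>e e'. e \<in> E \<Longrightarrow> e' \<in> E \<Longrightarrow> path_edges (P e) \<inter> path_edges (P e') \<noteq> {} \<Longrightarrow> e = e'"
  shows "coarse_wiring 1 V E W F \<phi> P"
proof -
  have subsingleton: "finite A \<and> card A \<le> 1" if "\<forall>a\<in>A. \<forall>b\<in>A. a = b" for A :: "'c set"
  proof (cases "A = {}")
    case False
    then obtain a where "a \<in> A" by blast
    with that have "A = {a}" by blast
    then show ?thesis by simp
  qed simp
  have "finite {x\<in>V. \<phi> x = y} \<and> card {x\<in>V. \<phi> x = y} \<le> 1" for y
    by (rule subsingleton) (use assms(2) in \<open>auto dest: inj_onD\<close>)
  moreover have "finite {e\<in>E. \<epsilon> \<in> path_edges (P e)} \<and> card {e\<in>E. \<epsilon> \<in> path_edges (P e)} \<le> 1" for \<epsilon>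
    by (rule subsingleton) (use assms(3) in blast)
  ultimately show ?thesis
    unfolding coarse_wiring_def using assms(1) by blast
qed

lemma path_edges_eq_image: "path_edges p = (\<lambda>i. {p ! i, p ! Suc i}) ` {i. Suc i < length p}"
  unfolding path_edges_def by blast

lemma path_edges_map: "path_edges (map g p) = (`) g ` path_edges p"
  unfolding path_edges_eq_image image_image by (rule image_cong) simp_all

lemma path_edges_two: "path_edges [a, b] = {{a, b}}"
  unfolding path_edges_def by auto

lemma is_path_map:
  assumes "is_path W F p" "inj g" "g ` W \<subseteq> W'" "\<And>\<epsilon>. \<epsilon> \<in> F \<Longrightarrow> g ` \<epsilon> \<in> F'"
  shows "is_path W' F' (map g p)"
proof -
  have "{map g p ! i, map g p ! Suc i} \<in> F'" if "Suc i < length p" for i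
  proof -
    have "g ` {p ! i, p ! Suc i} \<in> F'"
      using that assms(1,4) unfolding is_path_def by blast
    then show ?thesis
      using that by simp
  qed
  then show ?thesis
    using assms(1-3) unfolding is_path_def by (auto simp: distinct_map inj_on_subset)
qed

lemma is_wiring_map:
  assumes "is_wiring V E W F \<phi> P" "inj g" "g ` W \<subseteq> W'" "\<And>\<epsilon>. \<epsilon> \<in> F \<Longrightarrow> g ` \<epsilon> \<in> F'"
  shows "is_wiring V E W' F' (g \<circ> \<phi>) (map g \<circ> P)"
  unfolding is_wiring_def
proof (intro conjI ballI allI impI)
  show "(g \<circ> \<phi>) x \<in> W'" if "x \<in> V" for x
    using that assms(1,3) unfolding is_wiring_def by auto
  fix u v assume uv: "{u, v} \<in> E"
  then have path: "is_path W F (P {u, v})" and ends: "{hd (P {u, v}), last (P {u, v})} = {\<phi> u, \<phi> v}"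
    using assms(1) unfolding is_wiring_def by blast+
  show "is_path W' F' ((map g \<circ> P) {u, v})"
    using is_path_map[OF path assms(2-4)] by simp
  have "P {u, v} \<noteq> []"
    using path unfolding is_path_def by blast
  then have "{hd ((map g \<circ> P) {u, v}), last ((map g \<circ> P) {u, v})} = g ` {hd (P {u, v}), last (P {u, v})}"
    by (simp add: hd_map last_map)
  then show "{hd ((map g \<circ> P) {u, v}), last ((map g \<circ> P) {u, v})} = {(g \<circ> \<phi>) u, (g \<circ> \<phi>) v}"
    using ends by simp
qed

lemma coarse_wiring_1_map:
  assumes wiring: "is_wiring V E W F \<phi> P" and "inj_on \<phi> V"
    and disjoint: "\<And>e e'. e \<in> E \<Longrightarrow> e' \<in> E \<Longrightarrow> path_edges (P e) \<inter> path_edges (P e') \<noteq> {} \<Longrightarrow> e = e'"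
    and g: "inj g" "g ` W \<subseteq> W'" "\<And>\<epsilon>. \<epsilon> \<in> F \<Longrightarrow> g ` \<epsilon> \<in> F'"
  shows "coarse_wiring 1 V E W' F' (g \<circ> \<phi>) (map g \<circ> P)"
proof (rule coarse_wiring_1I)
  show "is_wiring V E W' F' (g \<circ> \<phi>) (map g \<circ> P)"
    using wiring g by (rule is_wiring_map)
  show "inj_on (g \<circ> \<phi>) V"
    using \<open>inj_on \<phi> V\<close> inj_on_subset[OF g(1) subset_UNIV] by (rule comp_inj_on)
  fix e e' assume "e \<in> E" "e' \<in> E"
    and "path_edges ((map g \<circ> P) e) \<inter> path_edges ((map g \<circ> P) e') \<noteq> {}"
  then obtain \<delta> \<delta>' where "\<delta> \<in> path_edges (P e)" "\<delta>' \<in> path_edges (P e')" "g ` \<delta> = g ` \<delta>'"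
    unfolding comp_apply path_edges_map by blast
  moreover from \<open>g ` \<delta> = g ` \<delta>'\<close> have "\<delta> = \<delta>'"
    by (simp add: inj_image_eq_iff[OF g(1)])
  ultimately show "e = e'"
    using disjoint[OF \<open>e \<in> E\<close> \<open>e' \<in> E\<close>] by blast
qed

lemma wiring_volume_map_le:
  assumes "finite W" "\<phi> ` V \<union> (\<Union>e\<in>E. set (P e)) \<subseteq> W"
  shows "wiring_volume V E (g \<circ> \<phi>) (map g \<circ> P) \<le> card W"
proof -
  have "wiring_volume V E (g \<circ> \<phi>) (map g \<circ> P) = card (g ` (\<phi> ` V \<union> (\<Union>e\<in>E. set (P e))))"
    unfolding wiring_volume_def by (simp add: image_Un image_UN image_comp)
  also have "\<dots> \<le> card (\<phi> ` V \<union> (\<Union>e\<in>E. set (P e)))"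
    using finite_subset[OF assms(2,1)] by (rule card_image_le)
  also have "\<dots> \<le> card W"
    using assms by (rule card_mono)
  finally show ?thesis .
qed

lemma grid_edgeE:
  assumes "e \<in> grid_E L m"
  obtains (column) i j where "e = {(i, j), (i, Suc j)}" "i < m" "j < L * m"
    | (row) i j where "e = {(i, j), (Suc i, j)}" "Suc i < m" "j \<le> L * m" "L dvd j"
  using assms unfolding grid_E_def by blast

lemma card_grid_V: "card (grid_V L m) = (L * m + 1) * m"
  unfolding grid_V_def by (simp add: card_cartesian_product)

lemma grid_edge_doubleton: "e \<in> grid_E L m \<Longrightarrow> \<exists>u v. e = {u, v}"
  by (elim grid_edgeE) blast+

definition column_path :: "nat \<Rightarrow> nat \<Rightarrow> nat \<Rightarrow> (nat \<times> nat) list" where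
  "column_path i a b = map (Pair i) [a..<Suc b]"

lemma column_path_nth: "k < length (column_path i a b) \<Longrightarrow> column_path i a b ! k = (i, a + k)"
  unfolding column_path_def by (simp del: upt_Suc)

lemma length_column_path [simp]: "length (column_path i a b) = Suc b - a"
  unfolding column_path_def by (simp del: upt_Suc)

lemma hd_column_path: "a \<le> b \<Longrightarrow> hd (column_path i a b) = (i, a)"
  unfolding column_path_def by (simp add: hd_map del: upt_Suc)

lemma last_column_path: "a \<le> b \<Longrightarrow> last (column_path i a b) = (i, b)"
  unfolding column_path_def by (simp add: last_map del: upt_Suc)

lemma path_edges_column_path:
  "path_edges (column_path i a b) = {{(i, k), (i, Suc k)} | k. a \<le> k \<and> k < b}"
proof -
  have "path_edges (column_path i a b) = (\<lambda>t. {(i, a + t), (i, Suc (a + t))}) ` {0..<b - a}"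
    unfolding path_edges_eq_image by (rule image_cong) (auto simp: column_path_nth)
  also have "\<dots> = (\<lambda>k. {(i, k), (i, Suc k)}) ` {a..<b}"
  proof -
    have "(+) a ` {0..<b - a} = {a..<b}"
      by (cases "a \<le> b") simp_all
    then have "(\<lambda>k. {(i, k), (i, Suc k)}) ` {a..<b} = (\<lambda>k. {(i, k), (i, Suc k)}) ` (+) a ` {0..<b - a}"
      by (simp only:)
    then show ?thesis
      by (simp only: image_image)
  qed
  finally show ?thesis by auto
qed

lemma is_path_column_path:
  assumes "i < m" "a \<le> b" "b \<le> L * m"
  shows "is_path (grid_V L m) (grid_E L m) (column_path i a b)"
  unfolding is_path_def
proof (intro conjI allI impI)
  show "column_path i a b \<noteq> []"
    by (metis length_column_path Suc_diff_le assms(2) list.size(3) nat.distinct(1))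
  show "distinct (column_path i a b)"
    unfolding column_path_def by (simp add: distinct_map inj_on_def del: upt_Suc)
  show "set (column_path i a b) \<subseteq> grid_V L m"
    using assms unfolding column_path_def grid_V_def by (auto simp del: upt_Suc)
  fix k assume k: "Suc k < length (column_path i a b)"
  then have "a + k < L * m"
    using assms by simp
  moreover have "{column_path i a b ! k, column_path i a b ! Suc k} = {(i, a + k), (i, Suc (a + k))}"
    using k by (simp add: column_path_nth)
  ultimately show "{column_path i a b ! k, column_path i a b ! Suc k} \<in> grid_E L m"
    using assms(1) unfolding grid_E_def by blast
qed

lemma is_path_rung:
  assumes "Suc i < m" "j \<le> L * m" "L dvd j"
  shows "is_path (grid_V L m) (grid_E L m) [(i, j), (Suc i, j)]"
  using assms unfolding is_path_def grid_V_def grid_E_def by (auto simp: less_Suc_eq)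

definition stretch_path :: "nat \<Rightarrow> (nat \<times> nat) set \<Rightarrow> (nat \<times> nat) list" where
  "stretch_path L e =
     (let i = Min (fst ` e); j = Min (snd ` e)
      in if fst ` e = {i} then column_path i (L * j) (L * Suc j) else [(i, L * j), (Suc i, L * j)])"

lemma stretch_path_column: "stretch_path L {(i, j), (i, Suc j)} = column_path i (L * j) (L * Suc j)"
  unfolding stretch_path_def by simp

lemma stretch_path_rung: "stretch_path L {(i, j), (Suc i, j)} = [(i, L * j), (Suc i, L * j)]"
  unfolding stretch_path_def by simp

lemma stretch_in_grid_V: "x \<in> grid_V L m \<Longrightarrow> apsnd ((*) L) x \<in> grid_V (L * L) m"
  unfolding grid_V_def by (auto simp: mult.assoc)

lemma stretch_path_of_grid_edge:
  assumes "{u, v} \<in> grid_E L m"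
  shows "is_path (grid_V (L * L) m) (grid_E (L * L) m) (stretch_path L {u, v}) \<and>
    {hd (stretch_path L {u, v}), last (stretch_path L {u, v})} = {apsnd ((*) L) u, apsnd ((*) L) v}"
  using assms
proof (cases rule: grid_edgeE)
  case (column i j)
  have "L * Suc j \<le> L * L * m"
    using column(3) by (simp add: mult.assoc del: mult_Suc_right)
  then have "is_path (grid_V (L * L) m) (grid_E (L * L) m) (column_path i (L * j) (L * Suc j))"
    using column(2) by (intro is_path_column_path) simp_all
  moreover have "{apsnd ((*) L) u, apsnd ((*) L) v} = {(i, L * j), (i, L * Suc j)}"
    using arg_cong[OF column(1), of "image (apsnd ((*) L))"] by simp
  ultimately show ?thesis
    using column(1) by (simp add: stretch_path_column hd_column_path last_column_path)
next
  case (row i j)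
  have "L * j \<le> L * L * m" "L * L dvd L * j"
    using row(3,4) by (simp_all add: mult.assoc)
  then have "is_path (grid_V (L * L) m) (grid_E (L * L) m) [(i, L * j), (Suc i, L * j)]"
    using row(2) by (rule is_path_rung[rotated])
  moreover have "{apsnd ((*) L) u, apsnd ((*) L) v} = {(i, L * j), (Suc i, L * j)}"
    using arg_cong[OF row(1), of "image (apsnd ((*) L))"] by simp
  ultimately show ?thesis
    using row(1) by (simp add: stretch_path_rung)
qed

lemma inj_apsnd_mult: "0 < (L :: nat) \<Longrightarrow> inj (apsnd ((*) L))"
  by (auto simp: inj_def)

lemma stretch_paths_disjoint:
  assumes "e \<in> grid_E L m" "e' \<in> grid_E L m"
    and "path_edges (stretch_path L e) \<inter> path_edges (stretch_path L e') \<noteq> {}"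
  shows "e = e'"
proof -
  have same_block: "j = j'" if "L * j \<le> k" "k < L * Suc j" "L * j' \<le> k" "k < L * Suc j'" for j j' k
    using div_nat_eqI[OF that(1,2)] div_nat_eqI[OF that(3,4)] by simp
  from assms(1) show ?thesis
  proof (cases rule: grid_edgeE)
    case column: (column i j)
    then obtain k where k: "L * j \<le> k" "k < L * Suc j"
      and shared: "{(i, k), (i, Suc k)} \<in> path_edges (stretch_path L e')"
      using assms(3) by (auto simp: stretch_path_column path_edges_column_path)
    from assms(2) show ?thesis
    proof (cases rule: grid_edgeE)
      case column': (column i' j')
      then obtain k' where "L * j' \<le> k'" "k' < L * Suc j'" "{(i, k), (i, Suc k)} = {(i', k'), (i', Suc k')}"
        using shared by (auto simp: stretch_path_column path_edges_column_path)
      then show ?thesis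
        using k column(1) column'(1) same_block by (auto simp: doubleton_eq_iff)
    next
      case (row i' j')
      then show ?thesis
        using shared by (auto simp: stretch_path_rung path_edges_two doubleton_eq_iff)
    qed
  next
    case (row i j)
    then have shared: "{(i, L * j), (Suc i, L * j)} \<in> path_edges (stretch_path L e')"
      using assms(3) by (auto simp: stretch_path_rung path_edges_two)
    from assms(2) show ?thesis
    proof (cases rule: grid_edgeE)
      case (column i' j')
      then show ?thesis
        using shared by (auto simp: stretch_path_column path_edges_column_path doubleton_eq_iff)
    next
      case row': (row i' j')
      then have "i = i'" "L * j = L * j'"
        using shared by (auto simp: stretch_path_rung path_edges_two doubleton_eq_iff)
      moreover have "j = j'" if "L = 0"
        using that row(3) row'(3) by simp
      ultimately show ?thesis
        using row(1) row'(1) by auto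
    qed
  qed
qed

lemma stretch_is_wiring:
  assumes "subgraph V E (grid_V L m) (grid_E L m)"
  shows "is_wiring V E (grid_V (L * L) m) (grid_E (L * L) m) (apsnd ((*) L)) (stretch_path L)"
  unfolding is_wiring_def
proof (intro conjI ballI allI impI)
  show "apsnd ((*) L) x \<in> grid_V (L * L) m" if "x \<in> V" for x
    using that assms stretch_in_grid_V unfolding subgraph_def by blast
  fix u v assume "{u, v} \<in> E"
  then have "{u, v} \<in> grid_E L m"
    using assms unfolding subgraph_def by blast
  then show "is_path (grid_V (L * L) m) (grid_E (L * L) m) (stretch_path L {u, v})"
    and "{hd (stretch_path L {u, v}), last (stretch_path L {u, v})} = {apsnd ((*) L) u, apsnd ((*) L) v}"
    by (simp_all add: stretch_path_of_grid_edge)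
qed

lemma stretch_image_subset:
  assumes "subgraph V E (grid_V L m) (grid_E L m)"
  shows "apsnd ((*) L) ` V \<union> (\<Union>e\<in>E. set (stretch_path L e)) \<subseteq> grid_V (L * L) m"
proof -
  have "set (stretch_path L e) \<subseteq> grid_V (L * L) m" if "e \<in> E" for e
  proof -
    have "e \<in> grid_E L m"
      using that assms unfolding subgraph_def by blast
    moreover obtain u v where "e = {u, v}"
      using grid_edge_doubleton[OF calculation] by blast
    ultimately show ?thesis
      using stretch_path_of_grid_edge[of u v L m] unfolding is_path_def by simp
  qed
  moreover have "apsnd ((*) L) ` V \<subseteq> grid_V (L * L) m"
    using assms stretch_in_grid_V unfolding subgraph_def by blast
  ultimately show ?thesis
    by blast
qed

lemma YnV_subset_YV: "1 \<le> n \<Longrightarrow> Pair n ` YnV f n \<subseteq> YV f"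
  unfolding YV_def by blast

lemma YnE_in_YE:
  assumes "1 \<le> n" "\<epsilon> \<in> YnE f n"
  shows "Pair n ` \<epsilon> \<in> YE f"
proof -
  obtain a b where "\<epsilon> = {a, b}"
    using assms(2) grid_edge_doubleton unfolding YnE_def by blast
  then have "{(n, a), (n, b)} \<in> YE f"
    using assms unfolding YE_def by blast
  with \<open>\<epsilon> = {a, b}\<close> show ?thesis
    by simp
qed

text \<open>Of the hypotheses on \<open>f\<close> none is needed: only \<open>n \<ge> 1\<close> is used, to make \<open>Y\<^sub>n\<close> a
  component of \<open>Y\<close>.\<close>

theorem lemma4p1:
  fixes f :: "nat \<Rightarrow> nat" and n :: nat
    and V :: "(nat \<times> nat) set" and E :: "(nat \<times> nat) set set"
  assumes f_surj: "\<forall>k\<ge>1. \<exists>m\<ge>1. f m = k"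
    and f_one: "f 1 = 1"
    and f_bounds: "\<forall>m\<ge>2. 2 \<le> f m \<and> f m \<le> m"
    and f_fibres: "\<forall>k\<ge>2. infinite {m. 1 \<le> m \<and> f m = k}"
    and n_pos: "1 \<le> n"
    and sub: "subgraph V E (XV f n) (XE f n)"
  shows "\<exists>\<phi> P. coarse_wiring 1 V E (YV f) (YE f) \<phi> P \<and>
           wiring_volume V E \<phi> P \<le> (2 ^ (2 ^ (2 * n + 1)) * f n + 1) * f n"
proof -
  define L :: nat where "L = 2 ^ 2 ^ (2 * n)"
  have LL: "2 ^ 2 ^ (2 * n + 1) = L * L"
    unfolding L_def by (simp flip: power_add)
  have grid: "subgraph V E (grid_V L (f n)) (grid_E L (f n))"
    using sub unfolding XV_def XE_def L_def .
  have Yn: "YnV f n = grid_V (L * L) (f n)" "YnE f n = grid_E (L * L) (f n)"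
    unfolding YnV_def YnE_def LL by simp_all
  have "0 < L" and E_grid: "E \<subseteq> grid_E L (f n)"
    using grid unfolding L_def subgraph_def by simp_all
  have "coarse_wiring 1 V E (YV f) (YE f) (Pair n \<circ> apsnd ((*) L)) (map (Pair n) \<circ> stretch_path L)"
  proof (rule coarse_wiring_1_map[OF stretch_is_wiring[OF grid]])
    show "inj_on (apsnd ((*) L)) V"
      using inj_apsnd_mult[OF \<open>0 < L\<close>] by (rule inj_on_subset) simp
    show "e = e'" if "e \<in> E" "e' \<in> E" "path_edges (stretch_path L e) \<inter> path_edges (stretch_path L e') \<noteq> {}" for e e'
      using stretch_paths_disjoint[OF _ _ that(3)] that(1,2) E_grid by blast
    show "inj (Pair n)"
      by (simp add: inj_def)
    show "Pair n ` grid_V (L * L) (f n) \<subseteq> YV f"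
      using YnV_subset_YV[OF n_pos, of f] unfolding Yn(1) .
    show "Pair n ` \<epsilon> \<in> YE f" if "\<epsilon> \<in> grid_E (L * L) (f n)" for \<epsilon>
      using YnE_in_YE[OF n_pos, of _ f] that unfolding Yn(2) by blast
  qed
  moreover have "wiring_volume V E (Pair n \<circ> apsnd ((*) L)) (map (Pair n) \<circ> stretch_path L) \<le> (L * L * f n + 1) * f n"
    using wiring_volume_map_le[OF _ stretch_image_subset[OF grid]] unfolding card_grid_V
    by (simp add: grid_V_def)
  ultimately show ?thesis
    unfolding LL by blast
qed

end
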